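(* Let $r'\in\mathbb{C}$ and $\sigma_s^2>0$. Let $s\sim\mathcal{CN}_1(0,\sigma_s^2)$ and $\mathbf{n}'=[n'_1,n'_2]^\top\sim\mathcal{CN}_2(\mathbf{0},I_2)$ be independent, and set $m'_1=s+n'_1$, $m'_2=r's+n'_2$, $\sigma_{m'_2}^2=|r'|^2\sigma_s^2+1$. Define the rectified binaural ratio $$y=\frac{1+\sigma_s^2}{\sigma_s^2}\cdot\frac{m'_2}{m'_1}.$$ Then $y\sim\mathcal{CT}_1\left(r',\ \lambda^2,\ 1\right)$ with $\displaystyle\lambda^2=\frac{\sigma_{m'_2}^2+\sigma_s^2}{\sigma_s^4}$.
   Context: $\mathcal{CN}_p(\mathbf{c},\Sigma)$ denotes the $p$-variate complex circular-symmetric normal distribution with mean $\mathbf{c}$ and covariance $\Sigma$, density $\frac{1}{\pi^p|\Sigma|}\exp\left(-(\mathbf{x}-\mathbf{c})^{\mathrm H}\Sigma^{-1}(\mathbf{x}-\mathbf{c})\right)$; $I_2$ is the $2\times 2$ identity. The univariate complex t-distribution $\mathcal{CT}_1(\mu,\lambda^2,\nu)$ with mean $\mu\in\mathbb{C}$, spread $\lambda^2>0$ and degrees of freedom $\nu>0$ has density $\frac{1}{\pi\lambda^2}\left(1+\frac{|y-\mu|^2}{\nu\lambda^2}\right)^{-(1+\nu)}$ on $\mathbb{C}$. *)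

theory Defs
  imports "HOL-Probability.Probability"
begin

definition cnormal1_density :: "complex \<Rightarrow> real \<Rightarrow> complex \<Rightarrow> real" where
  "cnormal1_density c \<sigma>2 x = 1 / (pi * \<sigma>2) * exp (- ((cmod (x - c))\<^sup>2) / \<sigma>2)"

text \<open>Density of the bivariate circular-symmetric complex normal CN_2(0, I_2) on
  complex x complex (vectors [x1,x2]^T represented as pairs): here |Sigma| = 1 and
  (x - 0)^H I_2^{-1} (x - 0) = |x1|^2 + |x2|^2.\<close>
definition cnormal2_std_density :: "complex \<times> complex \<Rightarrow> real" where
  "cnormal2_std_density x = 1 / (pi ^ 2) * exp (- ((cmod (fst x))\<^sup>2 + (cmod (snd x))\<^sup>2))"

definition ct1_density :: "complex \<Rightarrow> real \<Rightarrow> real \<Rightarrow> complex \<Rightarrow> real" where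
  "ct1_density \<mu> lam2 \<nu> y = 1 / (pi * lam2) * (1 + (cmod (y - \<mu>))\<^sup>2 / (\<nu> * lam2)) powr (- (1 + \<nu>))"

end

theory Submission
  imports Defs
begin

text \<open>
  Condition on the noise-free source \<open>s\<close>: for fixed \<open>s = x\<close> the pair \<open>(m\<^sub>1', m\<^sub>2')\<close> is Gaussian
  around \<open>(x, r' x)\<close>. Changing variables from the noise \<open>(n\<^sub>1', n\<^sub>2')\<close> to \<open>m = m\<^sub>1'\<close> and the
  ratio \<open>y\<close> costs the Jacobian \<open>|m/k|\<^sup>2\<close> of \<open>n\<^sub>2' = (m/k) y - r' x\<close>. The joint density of
  \<open>(x, m, y)\<close> is then a Gaussian in \<open>x\<close>, whose integral is again Gaussian in \<open>m\<close> with a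
  precision \<open>\<beta>(y)\<close> affine in \<open>|y - r'|\<^sup>2\<close>; integrating \<open>|m|\<^sup>2 exp (-\<beta> |m|\<^sup>2)\<close> over \<open>m\<close> gives
  \<open>\<pi>/\<beta>\<^sup>2 \<propto> (1 + |y - r'|\<^sup>2/\<lambda>\<^sup>2)\<^sup>-\<^sup>2\<close>, the complex t-density with one degree of freedom. The scale
  \<open>k = (1 + \<sigma>\<^sub>s\<^sup>2)/\<sigma>\<^sub>s\<^sup>2\<close> is exactly the one that centres it at \<open>r'\<close>.
\<close>

lemma measurable_Complex [measurable (raw)]:
  assumes "f \<in> borel_measurable M" "g \<in> borel_measurable M"
  shows "(\<lambda>x. Complex (f x) (g x)) \<in> borel_measurable M"
proof -
  have "(\<lambda>x. Complex (f x) (g x)) = (\<lambda>x. complex_of_real (f x) + \<i> * complex_of_real (g x))"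
    by (auto simp: fun_eq_iff Complex_eq)
  then show ?thesis using assms by simp
qed

lemma borel_measurable_fst_comp [measurable (raw)]:
  fixes g :: "'a \<Rightarrow> 'b::topological_space \<times> 'c::topological_space"
  shows "g \<in> borel_measurable M \<Longrightarrow> (\<lambda>x. fst (g x)) \<in> borel_measurable M"
  by (rule borel_measurable_continuous_on[OF continuous_on_fst[OF continuous_on_id]])

lemma borel_measurable_snd_comp [measurable (raw)]:
  fixes g :: "'a \<Rightarrow> 'b::topological_space \<times> 'c::topological_space"
  shows "g \<in> borel_measurable M \<Longrightarrow> (\<lambda>x. snd (g x)) \<in> borel_measurable M"
  by (rule borel_measurable_continuous_on[OF continuous_on_snd[OF continuous_on_id]])

lemma lborel_complex_eq_distr_Complex:
  "lborel = distr (lborel \<Otimes>\<^sub>M lborel) borel (\<lambda>(a, b). Complex a b)"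
proof (rule lborel_eqI)
  fix l u :: complex
  assume le: "\<And>b. b \<in> Basis \<Longrightarrow> l \<bullet> b \<le> u \<bullet> b"
  have "Re l \<le> Re u" "Im l \<le> Im u"
    using le[of 1] le[of \<i>] by (auto simp: Basis_complex_def)
  moreover have "(\<lambda>(a, b). Complex a b) \<in> lborel \<Otimes>\<^sub>M lborel \<rightarrow>\<^sub>M borel"
    by (simp add: case_prod_beta')
  moreover have "(\<lambda>(a, b). Complex a b) -` box l u \<inter> space (lborel \<Otimes>\<^sub>M lborel)
      = box (Re l) (Re u) \<times> box (Im l) (Im u)"
    by (auto simp: box_def Basis_complex_def space_pair_measure)
  ultimately show "emeasure (distr (lborel \<Otimes>\<^sub>M lborel) borel (\<lambda>(a, b). Complex a b)) (box l u)
      = (\<Prod>b\<in>Basis. (u - l) \<bullet> b)"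
    by (simp add: emeasure_distr lborel.emeasure_pair_measure_Times Basis_complex_def ennreal_mult)
qed simp

lemma nn_integral_lborel_complex:
  fixes f :: "complex \<Rightarrow> ennreal"
  assumes [measurable]: "f \<in> borel_measurable borel"
  shows "(\<integral>\<^sup>+z. f z \<partial>lborel) = (\<integral>\<^sup>+a. \<integral>\<^sup>+b. f (Complex a b) \<partial>lborel \<partial>lborel)"
proof -
  have [measurable]: "(\<lambda>(a, b). Complex a b) \<in> lborel \<Otimes>\<^sub>M lborel \<rightarrow>\<^sub>M borel"
    by (simp add: case_prod_beta')
  have "(\<integral>\<^sup>+z. f z \<partial>lborel) = (\<integral>\<^sup>+p. f (case p of (a, b) \<Rightarrow> Complex a b) \<partial>(lborel \<Otimes>\<^sub>M lborel))"
    by (subst lborel_complex_eq_distr_Complex) (simp add: nn_integral_distr)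
  also have "\<dots> = (\<integral>\<^sup>+a. \<integral>\<^sup>+b. f (Complex a b) \<partial>lborel \<partial>lborel)"
    by (subst lborel.nn_integral_fst[symmetric]) auto
  finally show ?thesis .
qed

lemma nn_integral_lborel_prod_iterated:
  fixes h :: "'a::euclidean_space \<times> 'b::euclidean_space \<Rightarrow> ennreal"
  assumes "h \<in> borel_measurable borel"
  shows "(\<integral>\<^sup>+p. h p \<partial>lborel) = (\<integral>\<^sup>+x. \<integral>\<^sup>+y. h (x, y) \<partial>lborel \<partial>lborel)"
proof -
  have "sets (lborel \<Otimes>\<^sub>M lborel :: ('a \<times> 'b) measure) = sets borel"
    by (metis borel_prod sets_lborel sets_pair_measure_cong)
  then have "h \<in> borel_measurable (lborel \<Otimes>\<^sub>M lborel)"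
    using assms measurable_cong_sets by blast
  then show ?thesis
    by (subst lborel_prod[symmetric], subst lborel.nn_integral_fst[symmetric]) auto
qed

lemma nn_integral_lborel_translate:
  fixes f :: "'b::euclidean_space \<Rightarrow> ennreal"
  assumes [measurable]: "f \<in> borel_measurable borel"
  shows "(\<integral>\<^sup>+z. f (c + z) \<partial>lborel) = (\<integral>\<^sup>+z. f z \<partial>lborel)"
  by (subst (2) lborel_distr_plus[symmetric, of c]) (simp add: nn_integral_distr)

text \<open>Fubini in real coordinates reduces this to two real affine substitutions, one per
  coordinate; this needs a nonzero pivot \<open>Re \<alpha>\<close>.\<close>

lemma nn_integral_lborel_complex_mult_Re_nonzero:
  fixes f :: "complex \<Rightarrow> ennreal"
  assumes [measurable]: "f \<in> borel_measurable borel" and p: "Re \<alpha> \<noteq> 0"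
  shows "(\<integral>\<^sup>+z. f (\<alpha> * z) \<partial>lborel) = ennreal (1 / (cmod \<alpha>)\<^sup>2) * (\<integral>\<^sup>+z. f z \<partial>lborel)"
proof -
  define p q where "p = Re \<alpha>" and "q = Im \<alpha>"
  have n2: "(cmod \<alpha>)\<^sup>2 = p\<^sup>2 + q\<^sup>2" by (simp add: p_def q_def cmod_power2)
  have pos: "(cmod \<alpha>)\<^sup>2 > 0" using p by (auto simp: n2 p_def intro!: add_pos_nonneg)
  have "(\<integral>\<^sup>+z. f (\<alpha> * z) \<partial>lborel) = (\<integral>\<^sup>+a. \<integral>\<^sup>+b. f (Complex (p*a - q*b) (q*a + p*b)) \<partial>lborel \<partial>lborel)"
    by (subst nn_integral_lborel_complex)
       (auto simp: p_def q_def Complex_eq intro!: nn_integral_cong arg_cong[where f=f] complex_eqI)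
  also have "\<dots> = (\<integral>\<^sup>+b. \<integral>\<^sup>+a. f (Complex (p*a - q*b) (q*a + p*b)) \<partial>lborel \<partial>lborel)"
    by (rule lborel_pair.Fubini') simp
  also have "\<dots> = (\<integral>\<^sup>+b. ennreal (1/\<bar>p\<bar>) * \<integral>\<^sup>+u. f (Complex u ((q*u + (cmod \<alpha>)\<^sup>2 * b)/p)) \<partial>lborel \<partial>lborel)"
  proof (rule nn_integral_cong)
    fix b :: real
    show "(\<integral>\<^sup>+a. f (Complex (p*a - q*b) (q*a + p*b)) \<partial>lborel)
        = ennreal (1/\<bar>p\<bar>) * \<integral>\<^sup>+u. f (Complex u ((q*u + (cmod \<alpha>)\<^sup>2 * b)/p)) \<partial>lborel"
      using p unfolding p_def[symmetric] n2
      by (subst nn_integral_real_affine[where c="1/p" and t="q*b/p"])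
         (auto simp: field_simps power2_eq_square intro!: nn_integral_cong arg_cong[where f=f])
  qed
  also have "\<dots> = ennreal (1/\<bar>p\<bar>) * (\<integral>\<^sup>+u. \<integral>\<^sup>+b. f (Complex u ((q*u + (cmod \<alpha>)\<^sup>2 * b)/p)) \<partial>lborel \<partial>lborel)"
    by (subst nn_integral_cmult) (simp, subst lborel_pair.Fubini', simp_all)
  also have "\<dots> = ennreal (1/\<bar>p\<bar>) * (\<integral>\<^sup>+u. ennreal (\<bar>p\<bar> / (cmod \<alpha>)\<^sup>2) * \<integral>\<^sup>+v. f (Complex u v) \<partial>lborel \<partial>lborel)"
  proof (intro arg_cong2[where f="(*)"] refl nn_integral_cong)
    fix u :: real
    show "(\<integral>\<^sup>+b. f (Complex u ((q*u + (cmod \<alpha>)\<^sup>2 * b)/p)) \<partial>lborel)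
        = ennreal (\<bar>p\<bar> / (cmod \<alpha>)\<^sup>2) * \<integral>\<^sup>+v. f (Complex u v) \<partial>lborel"
      using p pos unfolding p_def[symmetric]
      by (subst nn_integral_real_affine[where c="p / (cmod \<alpha>)\<^sup>2" and t="- q*u / (cmod \<alpha>)\<^sup>2"])
         (auto simp: abs_div field_simps intro!: nn_integral_cong arg_cong[where f=f])
  qed
  also have "\<dots> = ennreal (1/\<bar>p\<bar>) * ennreal (\<bar>p\<bar> / (cmod \<alpha>)\<^sup>2) * (\<integral>\<^sup>+z. f z \<partial>lborel)"
    by (subst nn_integral_cmult) (simp_all add: nn_integral_lborel_complex mult.assoc)
  finally show ?thesis
    using p pos unfolding p_def[symmetric] by (simp add: ennreal_mult''[symmetric])
qed

text \<open>When \<open>Re \<alpha> = 0\<close>, factor \<open>\<alpha> = \<beta> (1 + \<i>)\<close> with both factors of nonzero real part.\<close>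

lemma nn_integral_lborel_complex_mult:
  fixes f :: "complex \<Rightarrow> ennreal"
  assumes [measurable]: "f \<in> borel_measurable borel" and a: "\<alpha> \<noteq> 0"
  shows "(\<integral>\<^sup>+z. f (\<alpha> * z) \<partial>lborel) = ennreal (1 / (cmod \<alpha>)\<^sup>2) * (\<integral>\<^sup>+z. f z \<partial>lborel)"
proof (cases "Re \<alpha> = 0")
  case False
  then show ?thesis using nn_integral_lborel_complex_mult_Re_nonzero by simp
next
  case True
  define \<gamma> :: complex where "\<gamma> = 1 + \<i>"
  define \<beta> where "\<beta> = \<alpha> / \<gamma>"
  have g: "Re \<gamma> \<noteq> 0" "\<gamma> \<noteq> 0" by (auto simp: \<gamma>_def complex_eq_iff)
  have ab: "\<alpha> = \<beta> * \<gamma>" using g by (simp add: \<beta>_def)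
  have "Im \<alpha> \<noteq> 0" using a True complex_eqI by force
  then have b: "Re \<beta> \<noteq> 0" using True by (simp add: \<beta>_def \<gamma>_def Re_divide)
  have "(\<integral>\<^sup>+z. f (\<alpha> * z) \<partial>lborel) = (\<integral>\<^sup>+z. f (\<beta> * (\<gamma> * z)) \<partial>lborel)"
    by (simp add: ab mult.assoc)
  also have "\<dots> = ennreal (1 / (cmod \<gamma>)\<^sup>2) * (ennreal (1 / (cmod \<beta>)\<^sup>2) * (\<integral>\<^sup>+z. f z \<partial>lborel))"
    using g b by (simp add: nn_integral_lborel_complex_mult_Re_nonzero[where f="\<lambda>z. f (\<beta> * z)"]
        nn_integral_lborel_complex_mult_Re_nonzero[of f])
  also have "\<dots> = ennreal (1 / (cmod \<alpha>)\<^sup>2) * (\<integral>\<^sup>+z. f z \<partial>lborel)"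
    by (simp add: ab mult.assoc[symmetric] ennreal_mult''[symmetric] norm_mult power_mult_distrib
        mult.commute[of "(cmod \<gamma>)\<^sup>2"])
  finally show ?thesis .
qed

lemma nn_integral_lborel_complex_affine:
  fixes f :: "complex \<Rightarrow> ennreal"
  assumes [measurable]: "f \<in> borel_measurable borel" and "\<alpha> \<noteq> 0"
  shows "(\<integral>\<^sup>+z. f (\<alpha> * z + \<beta>) \<partial>lborel) = ennreal (1 / (cmod \<alpha>)\<^sup>2) * (\<integral>\<^sup>+z. f z \<partial>lborel)"
  using nn_integral_lborel_complex_mult[where f="\<lambda>z. f (z + \<beta>)", OF _ \<open>\<alpha> \<noteq> 0\<close>]
    nn_integral_lborel_translate[of f \<beta>]
  by (simp add: add.commute)

lemma exp_neg_square_eq_normal_density: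
  fixes a x :: real
  assumes "a > 0"
  shows "exp (- (a * x\<^sup>2)) = sqrt (pi / a) * normal_density 0 (sqrt (1 / (2 * a))) x"
proof -
  have "sqrt (2 * pi * (sqrt (1 / (2 * a)))\<^sup>2) = sqrt (pi / a)"
    and "- x\<^sup>2 / (2 * (sqrt (1 / (2 * a)))\<^sup>2) = - a * x\<^sup>2"
    using assms by simp_all
  then show ?thesis using assms by (simp add: normal_density_def)
qed

lemma nn_integral_gaussian:
  fixes a :: real
  assumes a: "a > 0"
  shows "(\<integral>\<^sup>+x. ennreal (exp (- (a * x\<^sup>2))) \<partial>lborel) = ennreal (sqrt (pi / a))"
proof -
  define \<sigma> where "\<sigma> = sqrt (1 / (2 * a))"
  have s: "\<sigma> > 0" using a by (simp add: \<sigma>_def)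
  have "(\<integral>\<^sup>+x. ennreal (exp (- (a * x\<^sup>2))) \<partial>lborel)
      = ennreal (sqrt (pi / a)) * (\<integral>\<^sup>+x. ennreal (normal_density 0 \<sigma> x) \<partial>lborel)"
    using a by (subst nn_integral_cmult[symmetric])
      (auto simp: exp_neg_square_eq_normal_density[OF a] \<sigma>_def ennreal_mult intro!: nn_integral_cong)
  also have "(\<integral>\<^sup>+x. ennreal (normal_density 0 \<sigma> x) \<partial>lborel) = 1"
    using integrable_normal_density[OF s] integral_normal_density[OF s]
    by (subst nn_integral_eq_integral) auto
  finally show ?thesis by simp
qed

lemma nn_integral_gaussian_second_moment:
  fixes a :: real
  assumes a: "a > 0"
  shows "(\<integral>\<^sup>+x. ennreal (x\<^sup>2 * exp (- (a * x\<^sup>2))) \<partial>lborel) = ennreal (sqrt (pi / a) / (2 * a))"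
proof -
  define \<sigma> where "\<sigma> = sqrt (1 / (2 * a))"
  have s: "\<sigma> > 0" using a by (simp add: \<sigma>_def)
  have eq: "x\<^sup>2 * exp (- (a * x\<^sup>2)) = sqrt (pi / a) * (normal_density 0 \<sigma> x * (x - 0) ^ (2 * 1))" for x
    using exp_neg_square_eq_normal_density[OF a, of x] by (simp add: \<sigma>_def power2_eq_square)
  have "(\<integral>\<^sup>+x. ennreal (x\<^sup>2 * exp (- (a * x\<^sup>2))) \<partial>lborel)
      = (\<integral>\<^sup>+x. ennreal (sqrt (pi / a)) * ennreal (normal_density 0 \<sigma> x * (x - 0) ^ (2 * 1)) \<partial>lborel)"
    by (intro nn_integral_cong) (simp only: eq, rule ennreal_mult'', simp)
  also have "\<dots> = ennreal (sqrt (pi / a)) * (\<integral>\<^sup>+x. ennreal (normal_density 0 \<sigma> x * (x - 0) ^ (2 * 1)) \<partial>lborel)"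
    by (rule nn_integral_cmult) simp
  also have "(\<integral>\<^sup>+x. ennreal (normal_density 0 \<sigma> x * (x - 0) ^ (2 * 1)) \<partial>lborel) = ennreal (\<sigma>\<^sup>2)"
    using integral_normal_moment_even[OF s, of 0 1] integrable_normal_moment[OF s, of 0 "2*1"]
    by (subst nn_integral_eq_integral) (auto simp: power2_eq_square)
  finally show ?thesis using a by (simp add: \<sigma>_def ennreal_mult''[symmetric])
qed

lemma nn_integral_complex_gaussian:
  fixes a :: real
  assumes a: "a > 0"
  shows "(\<integral>\<^sup>+z. ennreal (exp (- (a * (cmod z)\<^sup>2))) \<partial>lborel) = ennreal (pi / a)"
proof -
  have "(\<integral>\<^sup>+z. ennreal (exp (- (a * (cmod z)\<^sup>2))) \<partial>lborel)
      = (\<integral>\<^sup>+x. \<integral>\<^sup>+y. ennreal (exp (- (a * x\<^sup>2))) * ennreal (exp (- (a * y\<^sup>2))) \<partial>lborel \<partial>lborel)"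
    by (subst nn_integral_lborel_complex)
       (auto simp: cmod_power2 ennreal_mult[symmetric] mult_exp_exp algebra_simps intro!: nn_integral_cong)
  also have "\<dots> = ennreal (sqrt (pi / a)) * ennreal (sqrt (pi / a))"
    by (simp add: nn_integral_cmult nn_integral_multc nn_integral_gaussian[OF a])
  also have "\<dots> = ennreal (pi / a)"
    using a by (simp add: ennreal_mult[symmetric])
  finally show ?thesis .
qed

lemma nn_integral_complex_gaussian_second_moment:
  fixes a :: real
  assumes a: "a > 0"
  shows "(\<integral>\<^sup>+z. ennreal ((cmod z)\<^sup>2 * exp (- (a * (cmod z)\<^sup>2))) \<partial>lborel) = ennreal (pi / a\<^sup>2)"
proof -
  let ?g = "\<lambda>x::real. exp (- (a * x\<^sup>2))"
  have split: "ennreal ((cmod (Complex x y))\<^sup>2 * exp (- (a * (cmod (Complex x y))\<^sup>2)))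
      = ennreal (x\<^sup>2 * ?g x) * ennreal (?g y) + ennreal (?g x) * ennreal (y\<^sup>2 * ?g y)" for x y
  proof -
    have "exp (- (a * (x\<^sup>2 + y\<^sup>2))) = ?g x * ?g y"
      by (simp add: exp_add[symmetric] algebra_simps)
    then show ?thesis
      by (simp add: cmod_power2 algebra_simps ennreal_mult[symmetric] ennreal_plus[symmetric]
          del: ennreal_plus)
  qed
  have "(\<integral>\<^sup>+z. ennreal ((cmod z)\<^sup>2 * exp (- (a * (cmod z)\<^sup>2))) \<partial>lborel)
      = (\<integral>\<^sup>+x. \<integral>\<^sup>+y. ennreal (x\<^sup>2 * ?g x) * ennreal (?g y) + ennreal (?g x) * ennreal (y\<^sup>2 * ?g y)
          \<partial>lborel \<partial>lborel)"
    by (subst nn_integral_lborel_complex) (simp_all only: split, measurable)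
  also have "\<dots> = ennreal (sqrt (pi / a) / (2 * a)) * ennreal (sqrt (pi / a))
      + ennreal (sqrt (pi / a)) * ennreal (sqrt (pi / a) / (2 * a))"
    by (simp add: nn_integral_add nn_integral_cmult nn_integral_multc
        nn_integral_gaussian[OF a] nn_integral_gaussian_second_moment[OF a])
  also have "\<dots> = ennreal (pi / a\<^sup>2)"
  proof -
    have "sqrt (pi / a) * sqrt (pi / a) = pi / a" using a by simp
    then show ?thesis
      using a by (simp add: ennreal_mult''[symmetric] ennreal_plus[symmetric] field_simps
          power2_eq_square del: ennreal_plus)
  qed
  finally show ?thesis .
qed

text \<open>Completing the square: the substitution \<open>z = b/a + w\<close> leaves a centred Gaussian.\<close>

lemma nn_integral_complex_gaussian_linear:
  fixes a :: real and b :: complex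
  assumes a: "a > 0"
  shows "(\<integral>\<^sup>+z. ennreal (exp (- (a * (cmod z)\<^sup>2 - 2 * Re (cnj b * z)))) \<partial>lborel)
     = ennreal (pi / a * exp ((cmod b)\<^sup>2 / a))"
proof -
  have square: "a * (cmod (b / a + w))\<^sup>2 - 2 * Re (cnj b * (b / a + w)) = a * (cmod w)\<^sup>2 - (cmod b)\<^sup>2 / a"
    for w
  proof -
    have "a * (cmod (b / a + w))\<^sup>2 - 2 * Re (cnj b * (b / a + w))
       = a * ((Re b / a + Re w)\<^sup>2 + (Im b / a + Im w)\<^sup>2) - 2 * (Re b * (Re b / a + Re w) + Im b * (Im b / a + Im w))"
      by (simp add: cmod_power2 Re_divide_of_real Im_divide_of_real)
    also have "\<dots> = a * ((Re w)\<^sup>2 + (Im w)\<^sup>2) - ((Re b)\<^sup>2 + (Im b)\<^sup>2) / a"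
      using a by (simp add: field_simps power2_eq_square)
    finally show ?thesis by (simp add: cmod_power2)
  qed
  have "(\<integral>\<^sup>+z. ennreal (exp (- (a * (cmod z)\<^sup>2 - 2 * Re (cnj b * z)))) \<partial>lborel)
      = (\<integral>\<^sup>+w. ennreal (exp (- (a * (cmod (b / a + w))\<^sup>2 - 2 * Re (cnj b * (b / a + w))))) \<partial>lborel)"
    by (rule nn_integral_lborel_translate[symmetric]) simp
  also have "\<dots> = (\<integral>\<^sup>+w. ennreal (exp ((cmod b)\<^sup>2 / a)) * ennreal (exp (- (a * (cmod w)\<^sup>2))) \<partial>lborel)"
    by (intro nn_integral_cong) (simp only: square, simp add: ennreal_mult[symmetric] mult_exp_exp)
  also have "\<dots> = ennreal (exp ((cmod b)\<^sup>2 / a)) * ennreal (pi / a)"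
    by (simp add: nn_integral_cmult nn_integral_complex_gaussian[OF a])
  also have "\<dots> = ennreal (pi / a * exp ((cmod b)\<^sup>2 / a))"
    using a by (simp add: ennreal_mult[symmetric] mult.commute)
  finally show ?thesis .
qed

lemma cnormal1_density_measurable [measurable]: "cnormal1_density c \<sigma>2 \<in> borel_measurable borel"
  unfolding cnormal1_density_def[abs_def] by measurable

lemma cnormal2_std_density_measurable [measurable]: "cnormal2_std_density \<in> borel_measurable borel"
  unfolding cnormal2_std_density_def[abs_def] by (intro borel_measurable_continuous_onI continuous_intros)

lemma ct1_density_measurable [measurable]: "ct1_density \<mu> lam2 \<nu> \<in> borel_measurable borel"
  unfolding ct1_density_def[abs_def] by measurable

lemma cnormal1_density_nonneg: "\<sigma>2 \<ge> 0 \<Longrightarrow> cnormal1_density c \<sigma>2 x \<ge> 0"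
  by (simp add: cnormal1_density_def)

lemma cnormal2_std_density_Pair:
  "cnormal2_std_density (a, b) = cnormal1_density 0 1 a * cnormal1_density 0 1 b"
  by (simp add: cnormal2_std_density_def cnormal1_density_def exp_add[symmetric] power2_eq_square
      diff_divide_distrib)

text \<open>The joint density of the source \<open>s = x\<close>, the first channel \<open>m\<^sub>1' = m\<close> and the scaled
  ratio \<open>y = k m\<^sub>2'/m\<^sub>1'\<close>.\<close>

definition ratio_joint_density :: "real \<Rightarrow> complex \<Rightarrow> real \<Rightarrow> complex \<Rightarrow> complex \<Rightarrow> complex \<Rightarrow> real"
  where "ratio_joint_density \<sigma> r k x m y = (cmod (m / of_real k))\<^sup>2 *
    (cnormal1_density 0 \<sigma> x * cnormal1_density 0 1 (m - x) * cnormal1_density 0 1 (m / of_real k * y - r * x))"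

lemma ratio_joint_density_measurable [measurable (raw)]:
  assumes "f \<in> borel_measurable M" "g \<in> borel_measurable M" "h \<in> borel_measurable M"
  shows "(\<lambda>\<omega>. ratio_joint_density \<sigma> r k (f \<omega>) (g \<omega>) (h \<omega>)) \<in> borel_measurable M"
  unfolding ratio_joint_density_def using assms by measurable

lemma gaussian_exponent_expand:
  fixes x m u r :: complex and \<sigma> :: real
  shows "(cmod x)\<^sup>2 / \<sigma> + (cmod (m - x))\<^sup>2 + (cmod (u - r * x))\<^sup>2
    = (1 / \<sigma> + 1 + (cmod r)\<^sup>2) * (cmod x)\<^sup>2 - 2 * Re (cnj (m + cnj r * u) * x) + (cmod m)\<^sup>2 + (cmod u)\<^sup>2"
  unfolding cmod_power2 by (simp add: power2_eq_square algebra_simps add_divide_distrib)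

lemma ratio_precision_identity_real:
  fixes \<sigma> R Y P :: real
  assumes s: "\<sigma> > 0" and R: "R \<ge> 0"
  defines "k \<equiv> (1 + \<sigma>) / \<sigma>" and "L \<equiv> (R * \<sigma> + 1 + \<sigma>) / \<sigma>\<^sup>2" and "A \<equiv> 1 / \<sigma> + 1 + R"
  shows "1 + Y / k\<^sup>2 - (1 + 2 * P / k + R * Y / k\<^sup>2) / A = (Y - 2 * P + R + L) / (L * \<sigma> * k)"
proof -
  have k: "k > 0" using s by (simp add: k_def)
  have A: "A > 0" using s R by (simp add: A_def add_pos_nonneg)
  have AL: "A = L * \<sigma>" using s by (simp add: A_def L_def field_simps power2_eq_square)
  have L: "L > 0" using A AL s by (simp add: zero_less_mult_iff)
  have "A - R = k" using s by (simp add: A_def k_def field_simps)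
  moreover have "(A - 1) * k = R + L"
    using s by (simp add: A_def k_def L_def field_simps power2_eq_square)
  ultimately have key: "(A - 1) * k\<^sup>2 + (A - R) * Y = k * Y + k * R + k * L"
    by (simp add: power2_eq_square algebra_simps)
  have "1 + Y / k\<^sup>2 - (1 + 2 * P / k + R * Y / k\<^sup>2) / A
      = ((A - 1) * k\<^sup>2 + (A - R) * Y - 2 * P * k) / (A * k\<^sup>2)"
    using k A by (simp add: field_simps power2_eq_square)
  also have "\<dots> = (k * Y + k * R + k * L - 2 * P * k) / (A * k\<^sup>2)" by (simp add: key)
  also have "\<dots> = (Y - 2 * P + R + L) / (L * \<sigma> * k)"
    using k A AL s L by (simp add: field_simps power2_eq_square)
  finally show ?thesis .
qed

lemma ratio_precision_identity:
  fixes r y :: complex and \<sigma> :: real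
  assumes s: "\<sigma> > 0"
  defines "k \<equiv> (1 + \<sigma>) / \<sigma>" and "L \<equiv> ((cmod r)\<^sup>2 * \<sigma> + 1 + \<sigma>) / \<sigma>\<^sup>2"
    and "A \<equiv> 1 / \<sigma> + 1 + (cmod r)\<^sup>2"
  shows "1 + (cmod y)\<^sup>2 / k\<^sup>2 - (cmod (1 + cnj r * y / k))\<^sup>2 / A = ((cmod (y - r))\<^sup>2 + L) / (L * \<sigma> * k)"
proof -
  define P where "P = Re r * Re y + Im r * Im y"
  have kpos: "k \<noteq> 0" using s by (simp add: k_def)
  have c1: "(cmod (1 + cnj r * y / k))\<^sup>2 = 1 + 2 * P / k + (cmod r)\<^sup>2 * (cmod y)\<^sup>2 / k\<^sup>2"
    unfolding cmod_power2 P_def using kpos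
    by (simp add: Re_divide_of_real Im_divide_of_real power2_eq_square field_simps)
  have c2: "(cmod (y - r))\<^sup>2 = (cmod y)\<^sup>2 - 2 * P + (cmod r)\<^sup>2"
    unfolding cmod_power2 P_def by (simp add: power2_eq_square algebra_simps)
  show ?thesis unfolding c1 c2 unfolding k_def L_def A_def
    by (rule ratio_precision_identity_real[OF s zero_le_power2])
qed

lemma nn_integral_ratio_joint_density_source:
  fixes r y m :: complex and \<sigma> :: real
  assumes s: "\<sigma> > 0"
  defines "k \<equiv> (1 + \<sigma>) / \<sigma>" and "L \<equiv> ((cmod r)\<^sup>2 * \<sigma> + 1 + \<sigma>) / \<sigma>\<^sup>2"
    and "A \<equiv> 1 / \<sigma> + 1 + (cmod r)\<^sup>2"
  defines "\<beta> \<equiv> ((cmod (y - r))\<^sup>2 + L) / (L * \<sigma> * k)"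
  shows "(\<integral>\<^sup>+x. ennreal (ratio_joint_density \<sigma> r k x m y) \<partial>lborel)
       = ennreal (1 / (k\<^sup>2 * pi\<^sup>2 * \<sigma> * A) * ((cmod m)\<^sup>2 * exp (- (\<beta> * (cmod m)\<^sup>2))))"
proof -
  define u where "u = m / complex_of_real k * y"
  define b where "b = m + cnj r * u"
  define C where "C = (cmod (m / complex_of_real k))\<^sup>2 / (pi ^ 3 * \<sigma>) * exp (- ((cmod m)\<^sup>2 + (cmod u)\<^sup>2))"
  have kp: "k > 0" using s by (simp add: k_def)
  have Ap: "A > 0" using s by (simp add: A_def add_pos_nonneg)
  have Cnn: "C \<ge> 0" using s by (simp add: C_def)
  have integrand: "(cmod (m / complex_of_real k))\<^sup>2 * (cnormal1_density 0 \<sigma> x * cnormal1_density 0 1 (m - x)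
            * cnormal1_density 0 1 (u - r * x)) = C * exp (- (A * (cmod x)\<^sup>2 - 2 * Re (cnj b * x)))" for x
  proof -
    have "cnormal1_density 0 \<sigma> x * cnormal1_density 0 1 (m - x) * cnormal1_density 0 1 (u - r * x)
        = 1 / (pi ^ 3 * \<sigma>) * exp (- ((cmod x)\<^sup>2 / \<sigma> + (cmod (m - x))\<^sup>2 + (cmod (u - r * x))\<^sup>2))"
      by (simp add: cnormal1_density_def exp_add[symmetric] power3_eq_cube field_simps)
    also have "\<dots> = 1 / (pi ^ 3 * \<sigma>) * (exp (- ((cmod m)\<^sup>2 + (cmod u)\<^sup>2)) * exp (- (A * (cmod x)\<^sup>2 - 2 * Re (cnj b * x))))"
      unfolding gaussian_exponent_expand A_def b_def by (simp add: exp_add[symmetric] algebra_simps)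
    finally show ?thesis by (simp add: C_def)
  qed
  have exponent: "(cmod m)\<^sup>2 + (cmod u)\<^sup>2 - (cmod b)\<^sup>2 / A = \<beta> * (cmod m)\<^sup>2"
  proof -
    have b': "b = m * (1 + cnj r * y / complex_of_real k)" by (simp add: b_def u_def field_simps)
    have "(cmod m)\<^sup>2 + (cmod u)\<^sup>2 - (cmod b)\<^sup>2 / A
        = (cmod m)\<^sup>2 * (1 + (cmod y)\<^sup>2 / k\<^sup>2 - (cmod (1 + cnj r * y / k))\<^sup>2 / A)"
    proof -
      have nb: "(cmod b)\<^sup>2 = (cmod m)\<^sup>2 * (cmod (1 + cnj r * y / k))\<^sup>2"
        unfolding b' by (simp add: norm_mult power_mult_distrib)
      have nu: "(cmod u)\<^sup>2 = (cmod m)\<^sup>2 * ((cmod y)\<^sup>2 / k\<^sup>2)"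
        using kp unfolding u_def by (simp add: norm_mult norm_divide power_mult_distrib power_divide)
      show ?thesis unfolding nb nu by (simp add: algebra_simps)
    qed
    also have "\<dots> = (cmod m)\<^sup>2 * \<beta>"
      using ratio_precision_identity[OF s, of y r] unfolding \<beta>_def k_def L_def A_def by simp
    finally show ?thesis by simp
  qed
  have "(\<integral>\<^sup>+x. ennreal (ratio_joint_density \<sigma> r k x m y) \<partial>lborel)
      = (\<integral>\<^sup>+x. ennreal C * ennreal (exp (- (A * (cmod x)\<^sup>2 - 2 * Re (cnj b * x)))) \<partial>lborel)"
    by (intro nn_integral_cong) (simp only: ratio_joint_density_def u_def[symmetric] integrand
        ennreal_mult[OF Cnn exp_ge_zero])
  also have "\<dots> = ennreal C * ennreal (pi / A * exp ((cmod b)\<^sup>2 / A))"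
    by (subst nn_integral_cmult) (simp_all only: nn_integral_complex_gaussian_linear[OF Ap], measurable)
  also have "\<dots> = ennreal (C * (pi / A * exp ((cmod b)\<^sup>2 / A)))"
    using Cnn Ap by (subst ennreal_mult) auto
  also have "C * (pi / A * exp ((cmod b)\<^sup>2 / A)) = 1 / (k\<^sup>2 * pi\<^sup>2 * \<sigma> * A) * ((cmod m)\<^sup>2 * exp (- (\<beta> * (cmod m)\<^sup>2)))"
  proof -
    have "exp (- ((cmod m)\<^sup>2 + (cmod u)\<^sup>2)) * exp ((cmod b)\<^sup>2 / A) = exp (- (\<beta> * (cmod m)\<^sup>2))"
      using exponent by (simp add: exp_add[symmetric] algebra_simps)
    then show ?thesis
      using kp Ap s unfolding C_def
      by (simp add: norm_divide power_divide field_simps power2_eq_square power3_eq_cube)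
  qed
  finally show ?thesis .
qed

lemma nn_integral_ratio_joint_density:
  fixes r y :: complex and \<sigma> :: real
  assumes s: "\<sigma> > 0"
  defines "k \<equiv> (1 + \<sigma>) / \<sigma>" and "L \<equiv> ((cmod r)\<^sup>2 * \<sigma> + 1 + \<sigma>) / \<sigma>\<^sup>2"
  shows "(\<integral>\<^sup>+m. \<integral>\<^sup>+x. ennreal (ratio_joint_density \<sigma> r k x m y) \<partial>lborel \<partial>lborel)
       = ennreal (ct1_density r L 1 y)"
proof -
  define A where "A = 1 / \<sigma> + 1 + (cmod r)\<^sup>2"
  define \<beta> where "\<beta> = ((cmod (y - r))\<^sup>2 + L) / (L * \<sigma> * k)"
  define c where "c = 1 / (k\<^sup>2 * pi\<^sup>2 * \<sigma> * A)"
  have kp: "k > 0" using s by (simp add: k_def)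
  have Ap: "A > 0" using s by (simp add: A_def add_pos_nonneg)
  have Lp: "L > 0" using s by (simp add: L_def add_pos_nonneg add_nonneg_pos)
  have bp: "\<beta> > 0" using s kp Lp by (simp add: \<beta>_def add_nonneg_pos)
  have cp: "c \<ge> 0" using s kp Ap by (simp add: c_def)
  have AL: "A = L * \<sigma>" using s by (simp add: A_def L_def field_simps power2_eq_square)
  have "(\<integral>\<^sup>+m. \<integral>\<^sup>+x. ennreal (ratio_joint_density \<sigma> r k x m y) \<partial>lborel \<partial>lborel)
     = (\<integral>\<^sup>+m. ennreal c * ennreal ((cmod m)\<^sup>2 * exp (- (\<beta> * (cmod m)\<^sup>2))) \<partial>lborel)"
  proof (rule nn_integral_cong)
    fix m :: complex
    have "(\<integral>\<^sup>+x. ennreal (ratio_joint_density \<sigma> r k x m y) \<partial>lborel)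
        = ennreal (c * ((cmod m)\<^sup>2 * exp (- (\<beta> * (cmod m)\<^sup>2))))"
      unfolding c_def A_def \<beta>_def L_def k_def by (rule nn_integral_ratio_joint_density_source[OF s])
    then show "(\<integral>\<^sup>+x. ennreal (ratio_joint_density \<sigma> r k x m y) \<partial>lborel)
        = ennreal c * ennreal ((cmod m)\<^sup>2 * exp (- (\<beta> * (cmod m)\<^sup>2)))"
      using cp by (simp add: ennreal_mult)
  qed
  also have "\<dots> = ennreal c * ennreal (pi / \<beta>\<^sup>2)"
    by (subst nn_integral_cmult) (simp_all only: nn_integral_complex_gaussian_second_moment[OF bp], measurable)
  also have "\<dots> = ennreal (c * (pi / \<beta>\<^sup>2))"
    using cp by (subst ennreal_mult) auto
  also have "c * (pi / \<beta>\<^sup>2) = ct1_density r L 1 y"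
  proof -
    define D where "D = (cmod (y - r))\<^sup>2"
    have Dn: "D \<ge> 0" by (simp add: D_def)
    have power: "(1 + D / (1 * L)) powr (- (1 + 1)) = 1 / (1 + D / L)\<^sup>2"
      using Lp Dn by (simp add: powr_minus_divide powr_realpow add_pos_nonneg)
    have "ct1_density r L 1 y = 1 / (pi * L) * (1 / (1 + D / L)\<^sup>2)"
      unfolding ct1_density_def D_def[symmetric] power by simp
    also have "\<dots> = c * (pi / \<beta>\<^sup>2)"
      using Lp Dn s kp unfolding c_def \<beta>_def D_def[symmetric] AL
      by (simp add: field_simps power2_eq_square add_pos_nonneg)
    finally show ?thesis ..
  qed
  finally show ?thesis .
qed

text \<open>The substitution \<open>u = m - b\<close>, \<open>v = (m/c) y - a\<close> straightens the ratio
  \<open>c (a + v)/(b + u)\<close> into the coordinate \<open>y\<close>; it is singular only on the null set \<open>m = 0\<close>.\<close>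

lemma nn_integral_lborel_complex_ratio:
  fixes f g :: "complex \<Rightarrow> ennreal" and a b c :: complex
  assumes [measurable]: "f \<in> borel_measurable borel" "g \<in> borel_measurable borel" "A \<in> sets borel"
    and c: "c \<noteq> 0"
  shows "(\<integral>\<^sup>+u. \<integral>\<^sup>+v. f u * g v * indicator A (c * ((a + v) / (b + u))) \<partial>lborel \<partial>lborel)
    = (\<integral>\<^sup>+m. \<integral>\<^sup>+y. ennreal ((cmod (m / c))\<^sup>2) * f (m - b) * g (m / c * y - a) * indicator A y
        \<partial>lborel \<partial>lborel)"
proof -
  have "(\<integral>\<^sup>+u. \<integral>\<^sup>+v. f u * g v * indicator A (c * ((a + v) / (b + u))) \<partial>lborel \<partial>lborel)
      = (\<integral>\<^sup>+m. \<integral>\<^sup>+v. f (- b + m) * g v * indicator A (c * ((a + v) / (b + (- b + m)))) \<partial>lborel \<partial>lborel)"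
    by (rule nn_integral_lborel_translate[symmetric]) measurable
  also have "\<dots> = (\<integral>\<^sup>+m. \<integral>\<^sup>+y. ennreal ((cmod (m / c))\<^sup>2) * f (m - b) * g (m / c * y - a) * indicator A y
        \<partial>lborel \<partial>lborel)"
  proof (rule nn_integral_cong_AE)
    have "AE m in lborel. m \<noteq> (0::complex)"
      by (rule AE_I[where N="{0}"]) auto
    then show "AE m in lborel.
        (\<integral>\<^sup>+v. f (- b + m) * g v * indicator A (c * ((a + v) / (b + (- b + m)))) \<partial>lborel)
      = (\<integral>\<^sup>+y. ennreal ((cmod (m / c))\<^sup>2) * f (m - b) * g (m / c * y - a) * indicator A y \<partial>lborel)"
    proof (rule AE_mp, intro AE_I2 impI)
      fix m :: complex
      assume m: "m \<noteq> 0"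
      define \<alpha> where "\<alpha> = m / c"
      define F where "F v = f (m - b) * g v * indicator A (c * ((a + v) / m))" for v
      have \<alpha>: "\<alpha> \<noteq> 0" using m c by (simp add: \<alpha>_def)
      have [measurable]: "F \<in> borel_measurable borel" unfolding F_def by measurable
      have "(\<integral>\<^sup>+v. F v \<partial>lborel) = ennreal ((cmod \<alpha>)\<^sup>2) * (\<integral>\<^sup>+y. F (\<alpha> * y + - a) \<partial>lborel)"
        using nn_integral_lborel_complex_affine[of F \<alpha> "- a"] \<alpha>
        by (simp add: mult.assoc[symmetric] ennreal_mult''[symmetric])
      also have "\<dots> = (\<integral>\<^sup>+y. ennreal ((cmod \<alpha>)\<^sup>2) * f (m - b) * g (\<alpha> * y - a) * indicator A y \<partial>lborel)"
        using m c by (subst nn_integral_cmult[symmetric]) (auto simp: F_def \<alpha>_def mult.assoc)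
      finally show "(\<integral>\<^sup>+v. f (- b + m) * g v * indicator A (c * ((a + v) / (b + (- b + m)))) \<partial>lborel)
        = (\<integral>\<^sup>+y. ennreal ((cmod (m / c))\<^sup>2) * f (m - b) * g (m / c * y - a) * indicator A y \<partial>lborel)"
        by (simp add: F_def \<alpha>_def)
    qed
  qed
  finally show ?thesis .
qed

lemma nn_integral_gaussian_ratio_indicator:
  fixes r :: complex and \<sigma> :: real and A :: "complex set"
  assumes s: "\<sigma> > 0" and [measurable]: "A \<in> sets borel"
  defines "k \<equiv> (1 + \<sigma>) / \<sigma>" and "L \<equiv> ((cmod r)\<^sup>2 * \<sigma> + 1 + \<sigma>) / \<sigma>\<^sup>2"
  shows "(\<integral>\<^sup>+p. (case p of (x, n) \<Rightarrow> ennreal (cnormal1_density 0 \<sigma> x) * ennreal (cnormal2_std_density n))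
        * indicator A (case p of (x, n) \<Rightarrow> of_real k * ((r * x + snd n) / (x + fst n)))
      \<partial>(lborel \<Otimes>\<^sub>M lborel))
    = (\<integral>\<^sup>+y. ennreal (ct1_density r L 1 y) * indicator A y \<partial>lborel)"
proof -
  let ?pS = "\<lambda>x. ennreal (cnormal1_density 0 \<sigma> x)" and ?pN = "\<lambda>u. ennreal (cnormal1_density 0 1 u)"
  let ?G = "\<lambda>x m y. ennreal (ratio_joint_density \<sigma> r k x m y)"
  have "k > 0" using s by (simp add: k_def)
  then have k: "complex_of_real k \<noteq> 0" by simp
  have "(\<integral>\<^sup>+p. (case p of (x, n) \<Rightarrow> ennreal (cnormal1_density 0 \<sigma> x) * ennreal (cnormal2_std_density n))
        * indicator A (case p of (x, n) \<Rightarrow> of_real k * ((r * x + snd n) / (x + fst n)))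
      \<partial>(lborel \<Otimes>\<^sub>M lborel))
    = (\<integral>\<^sup>+x. \<integral>\<^sup>+u. \<integral>\<^sup>+v. ?pS x * ?pN u * ?pN v * indicator A (of_real k * ((r * x + v) / (x + u)))
        \<partial>lborel \<partial>lborel \<partial>lborel)"
    by (simp add: lborel_prod nn_integral_lborel_prod_iterated case_prod_beta
        cnormal2_std_density_Pair cnormal1_density_nonneg ennreal_mult' mult.assoc)
  also have "\<dots> = (\<integral>\<^sup>+x. \<integral>\<^sup>+m. \<integral>\<^sup>+y. ?G x m y * indicator A y \<partial>lborel \<partial>lborel \<partial>lborel)"
  proof (rule nn_integral_cong)
    fix x :: complex
    show "(\<integral>\<^sup>+u. \<integral>\<^sup>+v. ?pS x * ?pN u * ?pN v * indicator A (of_real k * ((r * x + v) / (x + u)))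
        \<partial>lborel \<partial>lborel) = (\<integral>\<^sup>+m. \<integral>\<^sup>+y. ?G x m y * indicator A y \<partial>lborel \<partial>lborel)"
      using nn_integral_lborel_complex_ratio[of "\<lambda>u. ?pS x * ?pN u" ?pN A "of_real k" "r * x" x, OF _ _ _ k]
      using less_imp_le[OF s] by (simp add: ratio_joint_density_def cnormal1_density_nonneg ennreal_mult' mult_ac)
  qed
  also have "\<dots> = (\<integral>\<^sup>+y. (\<integral>\<^sup>+m. \<integral>\<^sup>+x. ?G x m y \<partial>lborel \<partial>lborel) * indicator A y \<partial>lborel)"
  proof -
    have "(\<integral>\<^sup>+x. \<integral>\<^sup>+m. \<integral>\<^sup>+y. ?G x m y * indicator A y \<partial>lborel \<partial>lborel \<partial>lborel)
        = (\<integral>\<^sup>+y. \<integral>\<^sup>+x. \<integral>\<^sup>+m. ?G x m y * indicator A y \<partial>lborel \<partial>lborel \<partial>lborel)"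
      by (subst lborel_pair.Fubini') (simp_all add: lborel_pair.Fubini'[of "\<lambda>m y. ?G _ m y * indicator A y"])
    also have "\<dots> = (\<integral>\<^sup>+y. (\<integral>\<^sup>+x. \<integral>\<^sup>+m. ?G x m y \<partial>lborel \<partial>lborel) * indicator A y \<partial>lborel)"
      by (intro nn_integral_cong) (simp add: nn_integral_multc)
    also have "\<dots> = (\<integral>\<^sup>+y. (\<integral>\<^sup>+m. \<integral>\<^sup>+x. ?G x m y \<partial>lborel \<partial>lborel) * indicator A y \<partial>lborel)"
      by (intro nn_integral_cong arg_cong2[where f="(*)"] refl lborel_pair.Fubini') measurable
    finally show ?thesis .
  qed
  also have "\<dots> = (\<integral>\<^sup>+y. ennreal (ct1_density r L 1 y) * indicator A y \<partial>lborel)"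
    using nn_integral_ratio_joint_density[OF s] by (simp add: k_def L_def)
  finally show ?thesis .
qed

lemma (in prob_space) distributed_Pair_of_indep:
  assumes S: "sigma_finite_measure S" and T: "sigma_finite_measure T"
    and X: "distributed M S X Px" and Y: "distributed M T Y Py"
    and indep: "\<forall>A \<in> sets S. \<forall>B \<in> sets T.
      measure M ((X -` A \<inter> space M) \<inter> (Y -` B \<inter> space M)) =
      measure M (X -` A \<inter> space M) * measure M (Y -` B \<inter> space M)"
  shows "distributed M (S \<Otimes>\<^sub>M T) (\<lambda>\<omega>. (X \<omega>, Y \<omega>)) (\<lambda>(x, y). Px x * Py y)"
proof (rule distributed_joint_indep'[OF S T X Y], rule pair_measure_eqI)
  have [measurable]: "X \<in> M \<rightarrow>\<^sub>M S" "Y \<in> M \<rightarrow>\<^sub>M T"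
    using X Y by (auto dest: distributed_measurable)
  show "sigma_finite_measure (distr M S X)" "sigma_finite_measure (distr M T Y)"
    by (auto intro!: prob_space_imp_sigma_finite prob_space_distr)
  show "sets (distr M S X \<Otimes>\<^sub>M distr M T Y) = sets (distr M (S \<Otimes>\<^sub>M T) (\<lambda>\<omega>. (X \<omega>, Y \<omega>)))"
    by (simp cong: sets_pair_measure_cong)
  fix A B
  assume "A \<in> sets (distr M S X)" "B \<in> sets (distr M T Y)"
  then have [measurable]: "A \<in> sets S" "B \<in> sets T" by auto
  have "(\<lambda>\<omega>. (X \<omega>, Y \<omega>)) -` (A \<times> B) \<inter> space M = (X -` A \<inter> space M) \<inter> (Y -` B \<inter> space M)"
    by auto
  then show "emeasure (distr M S X) A * emeasure (distr M T Y) B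
      = emeasure (distr M (S \<Otimes>\<^sub>M T) (\<lambda>\<omega>. (X \<omega>, Y \<omega>))) (A \<times> B)"
    using indep by (simp add: emeasure_distr emeasure_eq_measure ennreal_mult[symmetric])
qed

lemma distributed_comp:
  assumes X: "distributed M N X f" and [measurable]: "h \<in> N \<rightarrow>\<^sub>M K" "g \<in> borel_measurable K"
    and eq: "\<And>A. A \<in> sets K \<Longrightarrow> (\<integral>\<^sup>+x. f x * indicator A (h x) \<partial>N) = (\<integral>\<^sup>+y. g y * indicator A y \<partial>K)"
  shows "distributed M K (\<lambda>\<omega>. h (X \<omega>)) g"
proof -
  have [measurable]: "X \<in> M \<rightarrow>\<^sub>M N" "f \<in> borel_measurable N"
    using X by (auto dest: distributed_measurable distributed_borel_measurable)
  have "distr M K (\<lambda>\<omega>. h (X \<omega>)) = distr (density N f) K h"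
    by (simp add: distributed_distr_eq_density[OF X, symmetric] distr_distr comp_def)
  also have "\<dots> = density K g"
  proof (rule measure_eqI)
    fix A
    assume "A \<in> sets (distr (density N f) K h)"
    then have [measurable]: "A \<in> sets K" by simp
    have "emeasure (distr (density N f) K h) A = (\<integral>\<^sup>+x. f x * indicator A (h x) \<partial>N)"
      by (auto simp: emeasure_distr emeasure_density intro!: nn_integral_cong split: split_indicator)
    then show "emeasure (distr (density N f) K h) A = emeasure (density K g) A"
      by (simp add: eq emeasure_density)
  qed simp
  finally show ?thesis
    unfolding distributed_def by simp
qed

theorem mainTheorem3:
  fixes M :: "'a measure"
    and s :: "'a \<Rightarrow> complex"
    and n' :: "'a \<Rightarrow> complex \<times> complex"
    and r' :: complex
    and \<sigma>s2 :: real
  assumes "prob_space M"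
    and "\<sigma>s2 > 0"
    and "distributed M lborel s (\<lambda>x. ennreal (cnormal1_density 0 \<sigma>s2 x))"
    and "distributed M lborel n' (\<lambda>x. ennreal (cnormal2_std_density x))"
    and "\<forall>A \<in> sets (borel :: complex measure). \<forall>B \<in> sets (borel :: (complex \<times> complex) measure).
           measure M ((s -` A \<inter> space M) \<inter> (n' -` B \<inter> space M)) =
           measure M (s -` A \<inter> space M) * measure M (n' -` B \<inter> space M)"
  shows "distributed M lborel
           (\<lambda>\<omega>. complex_of_real ((1 + \<sigma>s2) / \<sigma>s2) *
                  ((r' * s \<omega> + snd (n' \<omega>)) / (s \<omega> + fst (n' \<omega>))))
           (\<lambda>y. ennreal (ct1_density r'
                  (((cmod r')\<^sup>2 * \<sigma>s2 + 1 + \<sigma>s2) / \<sigma>s2\<^sup>2) 1 y))"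
proof -
  interpret prob_space M by fact
  define k where "k = (1 + \<sigma>s2) / \<sigma>s2"
  define L where "L = ((cmod r')\<^sup>2 * \<sigma>s2 + 1 + \<sigma>s2) / \<sigma>s2\<^sup>2"
  define h where "h = (\<lambda>(x, n). complex_of_real k * ((r' * x + snd n) / (x + fst n)))"
  have joint: "distributed M (lborel \<Otimes>\<^sub>M lborel) (\<lambda>\<omega>. (s \<omega>, n' \<omega>))
      (\<lambda>(x, n). ennreal (cnormal1_density 0 \<sigma>s2 x) * ennreal (cnormal2_std_density n))"
    using assms(3-5) by (intro distributed_Pair_of_indep) (auto intro: lborel.sigma_finite_measure_axioms)
  have "distributed M lborel (\<lambda>\<omega>. h (s \<omega>, n' \<omega>)) (\<lambda>y. ennreal (ct1_density r' L 1 y))"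
  proof (rule distributed_comp[OF joint])
    show "h \<in> lborel \<Otimes>\<^sub>M lborel \<rightarrow>\<^sub>M lborel"
      unfolding h_def by measurable
    fix A :: "complex set"
    assume "A \<in> sets lborel"
    then show "(\<integral>\<^sup>+p. (case p of (x, n) \<Rightarrow> ennreal (cnormal1_density 0 \<sigma>s2 x) * ennreal (cnormal2_std_density n))
        * indicator A (h p) \<partial>(lborel \<Otimes>\<^sub>M lborel))
      = (\<integral>\<^sup>+y. ennreal (ct1_density r' L 1 y) * indicator A y \<partial>lborel)"
      unfolding h_def k_def L_def by (intro nn_integral_gaussian_ratio_indicator assms(2)) simp
  qed simp
  then show ?thesis
    by (simp only: h_def k_def L_def prod.case)
qed

end
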